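(* $(\mathcal{K}(X),\overline{\mathbb{F}})$, with the Hausdorff metric, is strongly (cofinitely) sensitive if and only if $(X,\mathbb{F})$ is strongly (cofinitely) sensitive.
   Context: $(X,d)$ compact metric, $\mathbb{F}=(f_n)$ continuous self-maps, $\omega_n=f_n\circ\cdots\circ f_1$. Strongly (cofinitely) sensitive: there is $\delta>0$ such that for every $x$ and every neighborhood $U$ of $x$ there is $K$ with $\mathrm{diam}(\omega_n(U))>\delta$ for all $n\ge K$. $\mathcal{K}(X)$: non-empty compact subsets with the Hausdorff metric $d_H$; induced system $\overline{\omega}_n(A)=\omega_n(A)$, notion defined analogously using $d_H$. *)

theory Defs
  imports "HOL-Analysis.Analysis"
begin

definition hausdorff_dist :: "'a::metric_space set \<Rightarrow> 'a set \<Rightarrow> real" where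
  "hausdorff_dist A B = max (SUP a\<in>A. infdist a B) (SUP b\<in>B. infdist b A)"

definition hyperspace :: "'a::metric_space set \<Rightarrow> 'a set set" where
  "hyperspace X = {A. A \<subseteq> X \<and> compact A \<and> A \<noteq> {}}"

fun omega :: "(nat \<Rightarrow> 'a \<Rightarrow> 'a) \<Rightarrow> nat \<Rightarrow> 'a \<Rightarrow> 'a" where
  "omega f 0 = id"
| "omega f (Suc n) = f (Suc n) \<circ> omega f n"

definition gdiam :: "('b \<Rightarrow> 'b \<Rightarrow> real) \<Rightarrow> 'b set \<Rightarrow> real" where
  "gdiam d S = (SUP p\<in>S \<times> S. d (fst p) (snd p))"

definition gneighbourhood :: "'b set \<Rightarrow> ('b \<Rightarrow> 'b \<Rightarrow> real) \<Rightarrow> 'b \<Rightarrow> 'b set \<Rightarrow> bool" where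
  "gneighbourhood M d x U \<longleftrightarrow> U \<subseteq> M \<and> (\<exists>e>0. {y\<in>M. d x y < e} \<subseteq> U)"

definition strongly_sensitive :: "'b set \<Rightarrow> ('b \<Rightarrow> 'b \<Rightarrow> real) \<Rightarrow> (nat \<Rightarrow> 'b \<Rightarrow> 'b) \<Rightarrow> bool" where
  "strongly_sensitive M d w \<longleftrightarrow>
     (\<exists>\<delta>>0. \<forall>x\<in>M. \<forall>U. gneighbourhood M d x U \<longrightarrow>
        (\<exists>K. \<forall>n\<ge>K. gdiam d (w n ` U) > \<delta>))"

end

theory Submission
  imports Defs
begin

text \<open>
  If \<open>X\<close> is strongly sensitive, a compact set \<open>A\<close> is approximated within \<open>\<epsilon>\<close> by a finite
  \<open>\<epsilon>/3\<close>-net \<open>F\<close>. Eventually every ball of radius \<open>\<epsilon>/3\<close> around a point of \<open>F\<close> contains a point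
  whose orbit is \<open>\<delta>/2\<close>-far from the orbit of a fixed \<open>a\<^sub>0 \<in> A\<close>. The set \<open>G\<close> of these points
  and \<open>G \<union> {a\<^sub>0}\<close> both lie in the \<open>\<epsilon>\<close>-neighbourhood of \<open>A\<close>, while their images are at Hausdorff
  distance more than \<open>\<delta>/2\<close>. Conversely, compact sets Hausdorff-close to a singleton \<open>{x}\<close> lie in
  a small ball around \<open>x\<close>, and two images at Hausdorff distance more than \<open>\<delta>\<close> contain two
  points at distance more than \<open>\<delta>\<close>.
\<close>

lemma omega_image_subset:
  assumes "\<And>n. n \<ge> 1 \<Longrightarrow> f n ` X \<subseteq> X"
  shows "omega f n ` X \<subseteq> X"
  by (induction n) (use assms in \<open>auto simp: image_subset_iff\<close>)

lemma strongly_sensitive_eventually_iff: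
  "strongly_sensitive M d w \<longleftrightarrow>
     (\<exists>\<delta>>0. \<forall>x\<in>M. \<forall>U. gneighbourhood M d x U \<longrightarrow>
        (\<forall>\<^sub>F n in sequentially. \<delta> < gdiam d (w n ` U)))"
  unfolding strongly_sensitive_def eventually_sequentially by simp

lemma gdiam_gtD:
  assumes "S \<noteq> {}" "c < gdiam d S"
  shows "\<exists>p\<in>S. \<exists>q\<in>S. c < d p q"
proof (rule ccontr)
  assume "\<not> ?thesis"
  then have "gdiam d S \<le> c"
    unfolding gdiam_def using assms(1) by (auto intro!: cSUP_least simp: not_less)
  with assms(2) show False by simp
qed

lemma gdiam_gtI:
  assumes "p \<in> S" "q \<in> S" "c < d p q" "\<And>p q. p \<in> S \<Longrightarrow> q \<in> S \<Longrightarrow> d p q \<le> M"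
  shows "c < gdiam d S"
proof -
  have "bdd_above ((\<lambda>p. d (fst p) (snd p)) ` (S \<times> S))"
    using assms(4) by (intro bdd_aboveI2[where M=M]) auto
  then have "d p q \<le> gdiam d S"
    unfolding gdiam_def using assms(1,2) by (force intro: cSUP_upper2)
  with assms(3) show ?thesis by simp
qed

lemma exists_image_far_from:
  fixes g :: "'a \<Rightarrow> 'b::metric_space"
  assumes "S \<noteq> {}" "\<delta> < gdiam dist (g ` S)"
  shows "\<exists>y\<in>S. \<delta>/2 < dist (g y) z"
proof -
  obtain u v where "u \<in> S" "v \<in> S" "\<delta> < dist (g u) (g v)"
    using gdiam_gtD[of "g ` S" \<delta> dist] assms by auto
  moreover have "dist (g u) (g v) \<le> dist (g u) z + dist (g v) z"
    by (rule dist_triangle2)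
  ultimately have "\<delta>/2 < dist (g u) z \<or> \<delta>/2 < dist (g v) z" by linarith
  with \<open>u \<in> S\<close> \<open>v \<in> S\<close> show ?thesis by blast
qed

lemma hausdorff_dist_commute: "hausdorff_dist A B = hausdorff_dist B A"
  unfolding hausdorff_dist_def by (simp add: max.commute)

lemma hausdorff_dist_leI:
  fixes A B :: "'a::metric_space set"
  assumes "A \<noteq> {}" "B \<noteq> {}"
    and "\<And>a. a \<in> A \<Longrightarrow> \<exists>b\<in>B. dist a b \<le> r"
    and "\<And>b. b \<in> B \<Longrightarrow> \<exists>a\<in>A. dist b a \<le> r"
  shows "hausdorff_dist A B \<le> r"
proof -
  have "infdist a B \<le> r" if "a \<in> A" for a
    using assms(3)[OF that] infdist_le2 by blast
  moreover have "infdist b A \<le> r" if "b \<in> B" for b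
    using assms(4)[OF that] infdist_le2 by blast
  ultimately show ?thesis
    unfolding hausdorff_dist_def using assms(1,2) by (auto intro!: cSUP_least)
qed

lemma hausdorff_dist_gtD:
  fixes A B :: "'a::metric_space set"
  assumes "A \<noteq> {}" "B \<noteq> {}" "c < hausdorff_dist A B"
  shows "\<exists>a\<in>A. \<exists>b\<in>B. c < dist a b"
proof (rule ccontr)
  assume "\<not> ?thesis"
  then have "hausdorff_dist A B \<le> c"
    using assms(1,2) by (intro hausdorff_dist_leI) (auto simp: not_less, metis dist_commute)
  with assms(3) show False by simp
qed

lemma infdist_le_hausdorff_dist:
  fixes A B :: "'a::metric_space set"
  assumes "bounded A" "B \<noteq> {}" "a \<in> A"
  shows "infdist a B \<le> hausdorff_dist A B"
proof -
  obtain b where b: "b \<in> B" using assms(2) by blast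
  obtain r where r: "\<And>x. x \<in> A \<Longrightarrow> dist b x \<le> r"
    using assms(1) bounded_any_center by metis
  have "infdist x B \<le> r" if "x \<in> A" for x
    using infdist_le2[OF b] r[OF that] by (simp add: dist_commute)
  then have "bdd_above ((\<lambda>x. infdist x B) ` A)"
    by (intro bdd_aboveI2)
  then have "infdist a B \<le> (SUP x\<in>A. infdist x B)"
    using assms(3) by (rule cSUP_upper2) simp
  then show ?thesis unfolding hausdorff_dist_def by simp
qed

lemma hausdorff_dist_le_diameter:
  fixes A B S :: "'a::metric_space set"
  assumes "bounded S" "A \<subseteq> S" "B \<subseteq> S" "A \<noteq> {}" "B \<noteq> {}"
  shows "hausdorff_dist A B \<le> diameter S"
  using assms by (intro hausdorff_dist_leI) (auto intro!: diameter_bounded_bound)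

lemma hausdorff_dist_image_le_diameter:
  fixes X :: "'a::metric_space set"
  assumes "bounded X" "g ` X \<subseteq> X" "B \<in> hyperspace X" "C \<in> hyperspace X"
  shows "hausdorff_dist (g ` B) (g ` C) \<le> diameter X"
proof (rule hausdorff_dist_le_diameter[OF assms(1)])
  have "B \<subseteq> X" "C \<subseteq> X" "B \<noteq> {}" "C \<noteq> {}"
    using assms(3,4) unfolding hyperspace_def by auto
  then show "g ` B \<subseteq> X" "g ` C \<subseteq> X" "g ` B \<noteq> {}" "g ` C \<noteq> {}"
    using assms(2) by blast+
qed

lemma hausdorff_dist_singleton_lt_imp_subset_ball:
  fixes B :: "'a::metric_space set"
  assumes "bounded B" "hausdorff_dist {x} B < e"
  shows "B \<subseteq> ball x e"
proof
  fix b assume "b \<in> B"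
  then have "infdist b {x} \<le> hausdorff_dist B {x}"
    using assms(1) by (intro infdist_le_hausdorff_dist) auto
  with assms(2) show "b \<in> ball x e"
    by (simp add: hausdorff_dist_commute dist_commute)
qed

lemma hausdorff_dist_insert_gt:
  fixes G :: "'a::metric_space set"
  assumes "finite G" "G \<noteq> {}" "\<And>g. g \<in> G \<Longrightarrow> c < dist x g"
  shows "c < hausdorff_dist (insert x G) G"
proof -
  have "c < infdist x G"
    unfolding infdist_notempty[OF assms(2)] using assms by (subst finite_less_Inf_iff) auto
  also have "\<dots> \<le> hausdorff_dist (insert x G) G"
    using assms(1,2) by (intro infdist_le_hausdorff_dist) (auto intro: finite_imp_bounded)
  finally show ?thesis .
qed

lemma hausdorff_dist_perturbed_net:
  fixes A H :: "'a::metric_space set"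
  assumes "A \<noteq> {}" "F \<subseteq> A" "A \<subseteq> (\<Union>a\<in>F. ball a r)"
    and "\<And>a. a \<in> F \<Longrightarrow> dist a (y a) < r"
    and "y ` F \<subseteq> H" "H \<subseteq> y ` F \<union> A"
  shows "hausdorff_dist A H \<le> 2 * r"
proof -
  have near: "\<exists>p\<in>F. dist p a < r" if "a \<in> A" for a
    using assms(3) that by (meson UN_E mem_ball subsetD)
  then have "r > 0" using assms(1) by (metis ex_in_conv zero_le_dist le_less_trans)
  show ?thesis
  proof (rule hausdorff_dist_leI)
    show "H \<noteq> {}" using assms(1,5) near by blast
    show "\<exists>h\<in>H. dist a h \<le> 2 * r" if "a \<in> A" for a
    proof -
      obtain p where p: "p \<in> F" "dist p a < r" using near \<open>a \<in> A\<close> by blast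
      have "dist a (y p) \<le> dist a p + dist p (y p)" by (rule dist_triangle)
      then show ?thesis
        using p assms(4)[OF p(1)] assms(5) by (intro bexI[of _ "y p"]) (auto simp: dist_commute)
    qed
    show "\<exists>a\<in>A. dist h a \<le> 2 * r" if h: "h \<in> H" for h
    proof (cases "h \<in> A")
      case True
      then show ?thesis using \<open>r > 0\<close> by (intro bexI[of _ h]) auto
    next
      case False
      then obtain p where "p \<in> F" "h = y p" using assms(6) h by auto
      then show ?thesis
        using assms(2) assms(4)[of p] \<open>r > 0\<close> by (intro bexI[of _ p]) (auto simp: dist_commute)
    qed
  qed (use assms(1) in simp)
qed

lemma perturbed_net_in_hyperspace:
  fixes X :: "'a::metric_space set"
  assumes "A \<in> hyperspace X" "finite F" "F \<subseteq> A" "A \<subseteq> (\<Union>a\<in>F. ball a r)"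
    and "\<And>a. a \<in> F \<Longrightarrow> y a \<in> X" "\<And>a. a \<in> F \<Longrightarrow> dist a (y a) < r"
    and "y ` F \<subseteq> H" "H \<subseteq> insert a\<^sub>0 (y ` F)" "a\<^sub>0 \<in> A"
  shows "H \<in> hyperspace X" "hausdorff_dist A H \<le> 2 * r"
proof -
  have A: "A \<subseteq> X" "A \<noteq> {}" using assms(1) unfolding hyperspace_def by auto
  have "finite H" using assms(2,8) finite_subset by blast
  moreover have "H \<subseteq> X" using assms(5,8,9) A(1) by blast
  moreover have "H \<noteq> {}" using assms(3,4,7) A(2) by blast
  ultimately show "H \<in> hyperspace X" unfolding hyperspace_def by (simp add: finite_imp_compact)
  show "hausdorff_dist A H \<le> 2 * r"
    using A(2) assms(3,4,6,7,8,9) by (intro hausdorff_dist_perturbed_net) auto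
qed

lemma eventually_far_witnesses:
  fixes X :: "'a::metric_space set" and w :: "nat \<Rightarrow> 'a \<Rightarrow> 'b::metric_space"
  assumes sens: "\<And>x U. x \<in> X \<Longrightarrow> gneighbourhood X dist x U \<Longrightarrow>
                   \<forall>\<^sub>F n in sequentially. \<delta> < gdiam dist (w n ` U)"
    and "finite F" "F \<subseteq> X" "r > 0"
  shows "\<forall>\<^sub>F n in sequentially. \<forall>a\<in>F. \<exists>y\<in>X. dist a y < r \<and> \<delta>/2 < dist (w n y) (w n x\<^sub>0)"
proof (rule eventually_ball_finite[OF \<open>finite F\<close>], intro ballI)
  fix a assume "a \<in> F"
  then have a: "a \<in> {y\<in>X. dist a y < r}" using assms(3,4) by auto
  then have "gneighbourhood X dist a {y\<in>X. dist a y < r}"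
    unfolding gneighbourhood_def by auto
  with a show "\<forall>\<^sub>F n in sequentially. \<exists>y\<in>X. dist a y < r \<and> \<delta>/2 < dist (w n y) (w n x\<^sub>0)"
    using sens exists_image_far_from[of "{y\<in>X. dist a y < r}"] by (fastforce elim!: eventually_mono)
qed

lemma strongly_sensitive_base_if_hyperspace:
  fixes X :: "'a::metric_space set" and w :: "nat \<Rightarrow> 'a \<Rightarrow> 'a"
  assumes "bounded X" "\<And>n. w n ` X \<subseteq> X"
    and "strongly_sensitive (hyperspace X) hausdorff_dist (\<lambda>n A. w n ` A)"
  shows "strongly_sensitive X dist w"
proof -
  obtain \<delta> where "\<delta> > 0" and sens: "\<And>A \<U>. A \<in> hyperspace X \<Longrightarrow>
      gneighbourhood (hyperspace X) hausdorff_dist A \<U> \<Longrightarrow>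
      \<forall>\<^sub>F n in sequentially. \<delta> < gdiam hausdorff_dist ((\<lambda>A. w n ` A) ` \<U>)"
    using assms(3) unfolding strongly_sensitive_eventually_iff by blast
  have "\<forall>\<^sub>F n in sequentially. \<delta> < gdiam dist (w n ` U)"
    if "x \<in> X" and U: "gneighbourhood X dist x U" for x U
  proof -
    obtain e where "e > 0" and e: "{y\<in>X. dist x y < e} \<subseteq> U" and "U \<subseteq> X"
      using U unfolding gneighbourhood_def by blast
    define \<U> where "\<U> = {B \<in> hyperspace X. hausdorff_dist {x} B < e}"
    have x: "{x} \<in> \<U>"
      using \<open>x \<in> X\<close> \<open>e > 0\<close> unfolding \<U>_def hyperspace_def hausdorff_dist_def by auto
    have \<U>: "B \<subseteq> U" "B \<noteq> {}" if "B \<in> \<U>" for B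
    proof -
      have "B \<subseteq> X" "compact B" "B \<noteq> {}" "hausdorff_dist {x} B < e"
        using that unfolding \<U>_def hyperspace_def by auto
      moreover from this have "B \<subseteq> ball x e"
        by (intro hausdorff_dist_singleton_lt_imp_subset_ball compact_imp_bounded)
      ultimately show "B \<subseteq> U" "B \<noteq> {}" using e by (auto simp: subset_iff)
    qed
    have "gneighbourhood (hyperspace X) hausdorff_dist {x} \<U>"
      unfolding gneighbourhood_def \<U>_def using \<open>e > 0\<close> by auto
    then have ev: "\<forall>\<^sub>F n in sequentially. \<delta> < gdiam hausdorff_dist ((\<lambda>A. w n ` A) ` \<U>)"
      using sens x unfolding \<U>_def by blast
    show ?thesis
    proof (rule eventually_mono[OF ev])
      fix n assume "\<delta> < gdiam hausdorff_dist ((\<lambda>A. w n ` A) ` \<U>)"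
      then obtain A B where "A \<in> \<U>" "B \<in> \<U>" "\<delta> < hausdorff_dist (w n ` A) (w n ` B)"
        using gdiam_gtD[of "(\<lambda>A. w n ` A) ` \<U>"] x by blast
      then obtain a b where "a \<in> U" "b \<in> U" "\<delta> < dist (w n a) (w n b)"
        using hausdorff_dist_gtD[of "w n ` A" "w n ` B"] \<U> by blast
      then show "\<delta> < gdiam dist (w n ` U)"
        using \<open>U \<subseteq> X\<close> assms(1,2)
        by (intro gdiam_gtI[where M="diameter X"]) (auto intro!: diameter_bounded_bound)
    qed
  qed
  with \<open>\<delta> > 0\<close> show ?thesis unfolding strongly_sensitive_eventually_iff by blast
qed

lemma strongly_sensitive_hyperspace_if_base:
  fixes X :: "'a::metric_space set" and w :: "nat \<Rightarrow> 'a \<Rightarrow> 'a"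
  assumes "bounded X" "\<And>n. w n ` X \<subseteq> X" "strongly_sensitive X dist w"
  shows "strongly_sensitive (hyperspace X) hausdorff_dist (\<lambda>n A. w n ` A)"
proof -
  obtain \<delta> where "\<delta> > 0" and sens: "\<And>x U. x \<in> X \<Longrightarrow> gneighbourhood X dist x U \<Longrightarrow>
      \<forall>\<^sub>F n in sequentially. \<delta> < gdiam dist (w n ` U)"
    using assms(3) unfolding strongly_sensitive_eventually_iff by blast
  have "\<forall>\<^sub>F n in sequentially. \<delta>/2 < gdiam hausdorff_dist ((\<lambda>A. w n ` A) ` \<U>)"
    if hA: "A \<in> hyperspace X" and \<U>: "gneighbourhood (hyperspace X) hausdorff_dist A \<U>" for A \<U>
  proof -
    obtain e where "e > 0" and e: "{B\<in>hyperspace X. hausdorff_dist A B < e} \<subseteq> \<U>"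
      using \<U> unfolding gneighbourhood_def by blast
    have A: "A \<subseteq> X" "compact A" "A \<noteq> {}" using hA unfolding hyperspace_def by auto
    obtain F where F: "finite F" "F \<subseteq> A" "A \<subseteq> (\<Union>a\<in>F. ball a (e/3))"
      using seq_compact_imp_totally_bounded[OF compact_imp_seq_compact[OF A(2)]] \<open>e > 0\<close>
      by (meson divide_pos_pos zero_less_numeral)
    with A(3) have "F \<noteq> {}" by blast
    obtain a\<^sub>0 where "a\<^sub>0 \<in> A" using A(3) by blast
    have "\<forall>\<^sub>F n in sequentially. \<forall>a\<in>F. \<exists>y\<in>X. dist a y < e/3 \<and> \<delta>/2 < dist (w n y) (w n a\<^sub>0)"
      using sens F A(1) \<open>e > 0\<close> by (intro eventually_far_witnesses) auto
    then show ?thesis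
    proof (rule eventually_mono)
      fix n assume "\<forall>a\<in>F. \<exists>y\<in>X. dist a y < e/3 \<and> \<delta>/2 < dist (w n y) (w n a\<^sub>0)"
      then obtain y where y: "\<And>a. a \<in> F \<Longrightarrow> y a \<in> X"
          "\<And>a. a \<in> F \<Longrightarrow> dist a (y a) < e/3"
          "\<And>a. a \<in> F \<Longrightarrow> \<delta>/2 < dist (w n (y a)) (w n a\<^sub>0)"
        by metis
      have in_\<U>: "H \<in> \<U>" if "y ` F \<subseteq> H" "H \<subseteq> insert a\<^sub>0 (y ` F)" for H
      proof -
        have "H \<in> hyperspace X" "hausdorff_dist A H \<le> 2 * (e/3)"
          using perturbed_net_in_hyperspace[OF hA F _ y(2) that \<open>a\<^sub>0 \<in> A\<close>] y(1)
          by blast+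
        moreover have "2 * (e/3) < e" using \<open>e > 0\<close> by simp
        ultimately show ?thesis using e by fastforce
      qed
      have far: "\<delta>/2 < hausdorff_dist (w n ` insert a\<^sub>0 (y ` F)) (w n ` y ` F)"
        unfolding image_insert using F(1) \<open>F \<noteq> {}\<close> y(3)
        by (intro hausdorff_dist_insert_gt) (auto simp: dist_commute)
      have bound: "hausdorff_dist (w n ` B) (w n ` C) \<le> diameter X"
        if "B \<in> \<U>" "C \<in> \<U>" for B C
        using that \<U> assms(1,2) unfolding gneighbourhood_def
        by (intro hausdorff_dist_image_le_diameter) auto
      have "w n ` insert a\<^sub>0 (y ` F) \<in> (\<lambda>A. w n ` A) ` \<U>" "w n ` y ` F \<in> (\<lambda>A. w n ` A) ` \<U>"
        using in_\<U>[of "insert a\<^sub>0 (y ` F)"] in_\<U>[of "y ` F"] by blast+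
      then show "\<delta>/2 < gdiam hausdorff_dist ((\<lambda>A. w n ` A) ` \<U>)"
        by (rule gdiam_gtI[where d=hausdorff_dist and M="diameter X", OF _ _ far]) (use bound in blast)
    qed
  qed
  moreover have "\<delta>/2 > 0" using \<open>\<delta> > 0\<close> by simp
  ultimately show ?thesis unfolding strongly_sensitive_eventually_iff by blast
qed

theorem mainTheorem9:
  fixes X :: "'a::metric_space set" and f :: "nat \<Rightarrow> 'a \<Rightarrow> 'a"
  assumes "compact X"
    and "\<And>n. n \<ge> 1 \<Longrightarrow> continuous_on X (f n)"
    and "\<And>n. n \<ge> 1 \<Longrightarrow> f n ` X \<subseteq> X"
  shows "strongly_sensitive (hyperspace X) hausdorff_dist (\<lambda>n A. omega f n ` A)
         \<longleftrightarrow> strongly_sensitive X dist (omega f)"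
proof -
  have "bounded X" using assms(1) by (rule compact_imp_bounded)
  moreover have "\<And>n. omega f n ` X \<subseteq> X" using assms(3) by (rule omega_image_subset)
  ultimately show ?thesis
    by (metis strongly_sensitive_base_if_hyperspace strongly_sensitive_hyperspace_if_base)
qed

end
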